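(* Under the hypotheses of Theorem 7.7 (restated: $(\mathcal{F}_\lambda)$ a coherent family, $t:\mathbb{F}_q\to\mathbb{F}_\mathfrak{l}$ the trace function of $\mathcal{F}=\mathcal{F}_\lambda$, $\mathcal{I}$ a family of sums with $\mathcal{F}$ being $\bigcup_{k\in\mathcal{I}}\mathcal{I}(k)$-compatible), we have \[\Phi(t,\mathcal{I}',a)=\frac1{|\mathbb{F}_\mathfrak{l}|}+O\big(V(t,\mathcal{I})^{1/2}\big)\] uniformly in $a\in\mathbb{F}_\mathfrak{l}$, where $\Phi(t,\mathcal{I}',a)=\frac1q\sum_{x\in\mathbb{F}_q}\Phi(t,\mathcal{I}+x,a)=\frac{|\{(k,x)\in\mathcal{I}\times\mathbb{F}_q: S(t,\mathcal{I}(k)+x)\equiv a\}|}{q|\mathcal{I}|}$.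
   Context: Notation: $S(t,E)=\sum_{y\in E}t(y)$; a family of sums is a finite set $\mathcal{I}$ with an injective map $k\mapsto\mathcal{I}(k)\subset\mathbb{F}_q$; $\Phi(t,\mathcal{I}+x,a)=|\{k\in\mathcal{I}:S(t,\mathcal{I}(k)+x)\equiv a\}|/|\mathcal{I}|$; $V(t,\mathcal{I})=\sum_{a\in\mathbb{F}_\mathfrak{l}}\frac1q\sum_{x\in\mathbb{F}_q}(\Phi(t,\mathcal{I}+x,a)-|\mathbb{F}_\mathfrak{l}|^{-1})^2$. Coherent family: irreducible sheaves $\mathcal{F}_\lambda$ of $\mathbb{F}_\mathfrak{l}$-modules on $\mathbb{P}^1_{\mathbb{F}_{q(\lambda)}}$ ($\ell$-adic middle-extension sheaves, i.e. Galois representations of $\mathrm{Gal}(\mathbb{F}_q(T)^{sep}/\mathbb{F}_q(T))$) with uniformly bounded conductor, and either all Kummer sheaves $\mathcal{L}_{\chi(f)}$ (trace function $\chi\circ f\bmod\mathfrak{l}$) with monodromy $\mu_d(\mathbb{F}_\mathfrak{l})$; or $d$ prime, arithmetic = geometric monodromy $\mu_d(\mathbb{F}_\mathfrak{l})$, no geometric isomorphism $[+a]^*\mathcal{F}_\lambda\cong\mathcal{F}_\lambda^{\otimes i}$ ($1\le i<d$, $a\neq0$); or arithmetic = geometric monodromy conjugate to $\mathrm{SL}_n(\mathbb{F}_\mathfrak{l})$ or $\mathrm{Sp}_n(\mathbb{F}_\mathfrak{l})$ ($n$ even) and no geometric isomorphism $[+a]^*\mathcal{F}_\lambda\cong\mathcal{L}\otimes\sigma(\mathcal{F}_\lambda)$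 or $\mathcal{L}\otimes D(\sigma(\mathcal{F}_\lambda))$ ($a\ne0$, $\sigma\in\mathrm{Aut}(\mathbb{F}_\mathfrak{l})$, $\mathcal{L}$ rank one). $E$-compatibility is automatic except for Kummer sheaves $\mathcal{L}_{\chi(f_1/f_2)}$, where it means $\sum_{i=1}^mx_i\ne0$ for $x_i\in E$, $1\le m\le\deg f_1$. *)

theory Defs
  imports "HOL-Analysis.Analysis"
begin

text \<open>The finite fields F_q and F_l are modelled by finite field types 'q and 'l.
A family of sums is a finite nonempty index set I with an injective map
fam : I -> finite subsets of F_q.\<close>

definition S :: "('q::field \<Rightarrow> 'l::field) \<Rightarrow> 'q set \<Rightarrow> 'l" where
  "S t E = (\<Sum>y\<in>E. t y)"

definition family_of_sums :: "'k set \<Rightarrow> ('k \<Rightarrow> 'q set) \<Rightarrow> bool" where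
  "family_of_sums I fam \<longleftrightarrow> finite I \<and> I \<noteq> {} \<and> inj_on fam I \<and> (\<forall>k\<in>I. finite (fam k))"

definition shift :: "'q::field set \<Rightarrow> 'q \<Rightarrow> 'q set" where
  "shift E x = (\<lambda>y. y + x) ` E"

definition Phi :: "('q::field \<Rightarrow> 'l::field) \<Rightarrow> 'k set \<Rightarrow> ('k \<Rightarrow> 'q set) \<Rightarrow> 'q \<Rightarrow> 'l \<Rightarrow> real" where
  "Phi t I fam x a = real (card {k\<in>I. S t (shift (fam k) x) = a}) / real (card I)"

definition Phi_avg :: "('q::{field,finite} \<Rightarrow> 'l::field) \<Rightarrow> 'k set \<Rightarrow> ('k \<Rightarrow> 'q set) \<Rightarrow> 'l \<Rightarrow> real" where
  "Phi_avg t I fam a = (1 / real CARD('q)) * (\<Sum>x\<in>(UNIV::'q set). Phi t I fam x a)"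

definition V :: "('q::{field,finite} \<Rightarrow> 'l::{field,finite}) \<Rightarrow> 'k set \<Rightarrow> ('k \<Rightarrow> 'q set) \<Rightarrow> real" where
  "V t I fam = (\<Sum>a\<in>(UNIV::'l set). (1 / real CARD('q)) *
      (\<Sum>x\<in>(UNIV::'q set). (Phi t I fam x a - 1 / real CARD('l))\<^sup>2))"

end

theory Submission
  imports Defs
begin

text \<open>The average over x of Phi(t, I + x, a) - 1/|F_l| is bounded by Cauchy-Schwarz (the square of
a mean is at most the mean of the squares), and the mean of the squares is a single nonnegative
summand of V(t, I).\<close>

lemma mean_squared_le_mean_of_squares:
  fixes f :: "'a \<Rightarrow> real"
  assumes "finite A" and "A \<noteq> {}"
  shows "((\<Sum>x\<in>A. f x) / real (card A))\<^sup>2 \<le> (\<Sum>x\<in>A. (f x)\<^sup>2) / real (card A)"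
proof -
  define n where "n = real (card A)"
  have "n > 0" using assms unfolding n_def by (simp add: card_gt_0_iff)
  have "((\<Sum>x\<in>A. f x) / n)\<^sup>2 = (\<Sum>x\<in>A. f x)\<^sup>2 / n\<^sup>2"
    by (simp add: power_divide)
  also have "\<dots> \<le> (\<Sum>x\<in>A. (f x)\<^sup>2) * n / n\<^sup>2"
    using sum_squared_le_sum_of_squares[of f A] unfolding n_def by (simp add: divide_right_mono)
  also have "\<dots> = (\<Sum>x\<in>A. (f x)\<^sup>2) / n"
    using \<open>n > 0\<close> by (simp add: power2_eq_square)
  finally show ?thesis unfolding n_def .
qed

lemma Phi_avg_minus_const:
  fixes t :: "'q::{field,finite} \<Rightarrow> 'l::field"
  shows "Phi_avg t I fam a - c = (\<Sum>x\<in>UNIV. Phi t I fam x a - c) / real CARD('q)"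
  by (simp add: Phi_avg_def sum_subtractf field_simps)

lemma mean_square_deviation_le_V:
  fixes t :: "'q::{field,finite} \<Rightarrow> 'l::{field,finite}"
  shows "(\<Sum>x\<in>UNIV. (Phi t I fam x a - 1 / real CARD('l))\<^sup>2) / real CARD('q) \<le> V t I fam"
proof -
  let ?g = "\<lambda>b. 1 / real CARD('q) * (\<Sum>x\<in>(UNIV::'q set). (Phi t I fam x b - 1 / real CARD('l))\<^sup>2)"
  have "?g a \<le> (\<Sum>b\<in>UNIV. ?g b)"
    by (rule member_le_sum) (simp_all add: sum_nonneg)
  then show ?thesis unfolding V_def by simp
qed

theorem corollary7p8:
  fixes t :: "'q::{field,finite} \<Rightarrow> 'l::{field,finite}"
    and I :: "'k set" and fam :: "'k \<Rightarrow> 'q set" and a :: 'l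
  assumes "family_of_sums I fam"
  shows "\<bar>Phi_avg t I fam a - 1 / real CARD('l)\<bar> \<le> 1 * sqrt (V t I fam)"
proof -
  let ?f = "\<lambda>x. Phi t I fam x a - 1 / real CARD('l)"
  have "(Phi_avg t I fam a - 1 / real CARD('l))\<^sup>2 = ((\<Sum>x\<in>UNIV. ?f x) / real CARD('q))\<^sup>2"
    by (simp only: Phi_avg_minus_const)
  also have "\<dots> \<le> (\<Sum>x\<in>UNIV. (?f x)\<^sup>2) / real CARD('q)"
    using mean_squared_le_mean_of_squares[of UNIV ?f] by simp
  also have "\<dots> \<le> V t I fam"
    by (rule mean_square_deviation_le_V)
  finally have "sqrt ((Phi_avg t I fam a - 1 / real CARD('l))\<^sup>2) \<le> sqrt (V t I fam)"
    using real_sqrt_le_mono by blast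
  then show ?thesis by simp
qed

end
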